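(* Let $\mathbf{W}=\langle W;\to,\neg,{}^{+},{}^{-},1\rangle$ be a quasi-Wajsberg* algebra, $0:=1\to 1$ and $x\wedge y:=\neg(\neg x\vee\neg y)$. Then for any $x,y\in W$: (1) $x\vee 0=0\to x^{+}$ and $x\wedge 0=0\to x^{-}$; (2) $x^{+}\vee 0=0\to x^{+}$, $x^{-}\wedge 0=0\to x^{-}$, $x^{-}\vee 0=0$ and $x^{+}\wedge 0=0$; (3) $x\vee y=\neg(x^{+}\vee y^{+})\to(x^{-}\vee y^{-})$ and $x\wedge y=\neg(x^{+}\wedge y^{+})\to(x^{-}\wedge y^{-})$; (4) $x^{+}\vee x^{-}=0\to x^{+}$ and $x^{+}\wedge x^{-}=0\to x^{-}$; (5) $0\to x=\neg x^{+}\to x^{-}$; (6) $(x\vee y)^{+}=x^{+}\vee y^{+}$, $(x\vee y)^{-}=x^{-}\vee y^{-}$, $(x\wedge y)^{+}=x^{+}\wedge y^{+}$ and $(x\wedge y)^{-}=x^{-}\wedge y^{-}$; (7) $x\vee(x\wedge y)=x\vee x$ and $x\wedge(x\vee y)=x\wedge x$.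
   Context: A quasi-Wajsberg* algebra is an algebra $\langle W;\to,\neg,{}^{+},{}^{-},1\rangle$ of type $\langle2,1,1,1,0\rangle$ such that for all $x,y,z\in W$: (QW*1) $x\to y=\neg y\to\neg x$; (QW*2) $(x\to 1)\to((y\to 1)\to z)=(y\to 1)\to((x\to 1)\to z)$; (QW*3) $(1\to x)\to 1=1$; (QW*4) $(z\to z)\to(x\to y)=x\to y$; (QW*5) $(1\to 1)\to x^{+}=((1\to 1)\to x)^{+}=(x\to 1)\to 1$ and $(1\to 1)\to x^{-}=((1\to 1)\to x)^{-}=(x\to\neg 1)\to\neg 1$; (QW*6) $x\to y=(y^{+}\to x^{-})\to(x^{+}\to y^{-})$; (QW*7) $\neg(x\to y)=y\to x$; (QW*8) $\neg\neg x=x$; (QW*9) $(x\to(\neg x\to y))^{+}=x^{+}\to(\neg x^{+}\to y^{+})$; (QW*10) $x\vee y=y\vee x$; (QW*11) $x\vee(y\vee z)=(x\vee y)\vee z$; (QW*12) $x\to(y\vee z)=(x\to y)\vee(x\to z)$; where $x\vee y:=((x^{+}\to y^{+})^{+}\to(\neg x)^{-})\to((y^{-}\to x^{-})^{-}\to x^{-})$. Conventions: ${}^+,{}^-$ bind tighter than $\neg$, which binds tighter than $\to$, and $\to$ binds tighter than $\vee,\wedge$. *)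

theory Defs
  imports Main
begin

text \<open>Quasi-Wajsberg* algebras, with carrier the whole type 'a.
  imp = \<open>\<rightarrow>\<close>, neg = \<open>\<not>\<close>, pl = \<open>^+\<close>, mi = \<open>^-\<close>, one = 1.\<close>

definition qw_join :: "('a \<Rightarrow> 'a \<Rightarrow> 'a) \<Rightarrow> ('a \<Rightarrow> 'a) \<Rightarrow> ('a \<Rightarrow> 'a) \<Rightarrow> ('a \<Rightarrow> 'a) \<Rightarrow> 'a \<Rightarrow> 'a \<Rightarrow> 'a"
  where "qw_join imp neg pl mi x y =
    imp (imp (pl (imp (pl x) (pl y))) (mi (neg x))) (imp (mi (imp (mi y) (mi x))) (mi x))"

definition qw_meet :: "('a \<Rightarrow> 'a \<Rightarrow> 'a) \<Rightarrow> ('a \<Rightarrow> 'a) \<Rightarrow> ('a \<Rightarrow> 'a) \<Rightarrow> ('a \<Rightarrow> 'a) \<Rightarrow> 'a \<Rightarrow> 'a \<Rightarrow> 'a"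
  where "qw_meet imp neg pl mi x y = neg (qw_join imp neg pl mi (neg x) (neg y))"

definition quasi_wajsberg_star ::
  "('a \<Rightarrow> 'a \<Rightarrow> 'a) \<Rightarrow> ('a \<Rightarrow> 'a) \<Rightarrow> ('a \<Rightarrow> 'a) \<Rightarrow> ('a \<Rightarrow> 'a) \<Rightarrow> 'a \<Rightarrow> bool"
  where "quasi_wajsberg_star imp neg pl mi one \<longleftrightarrow>
    (\<forall>x y. imp x y = imp (neg y) (neg x)) \<and>
    (\<forall>x y z. imp (imp x one) (imp (imp y one) z) = imp (imp y one) (imp (imp x one) z)) \<and>
    (\<forall>x. imp (imp one x) one = one) \<and>
    (\<forall>x y z. imp (imp z z) (imp x y) = imp x y) \<and>
    (\<forall>x. imp (imp one one) (pl x) = pl (imp (imp one one) x) \<and>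
         pl (imp (imp one one) x) = imp (imp x one) one) \<and>
    (\<forall>x. imp (imp one one) (mi x) = mi (imp (imp one one) x) \<and>
         mi (imp (imp one one) x) = imp (imp x (neg one)) (neg one)) \<and>
    (\<forall>x y. imp x y = imp (imp (pl y) (mi x)) (imp (pl x) (mi y))) \<and>
    (\<forall>x y. neg (imp x y) = imp y x) \<and>
    (\<forall>x. neg (neg x) = x) \<and>
    (\<forall>x y. pl (imp x (imp (neg x) y)) = imp (pl x) (imp (neg (pl x)) (pl y))) \<and>
    (\<forall>x y. qw_join imp neg pl mi x y = qw_join imp neg pl mi y x) \<and>
    (\<forall>x y z. qw_join imp neg pl mi x (qw_join imp neg pl mi y z) =
             qw_join imp neg pl mi (qw_join imp neg pl mi x y) z) \<and>
    (\<forall>x y z. imp x (qw_join imp neg pl mi y z) =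
             qw_join imp neg pl mi (imp x y) (imp x z))"

end

theory Submission
  imports Defs
begin

text \<open>The map \<open>x \<mapsto> 0 \<rightarrow> x\<close> fixes every implication, and by (QW*12) together with
  \<open>x \<or> x = 0 \<rightarrow> x\<close> the connective \<open>\<rightarrow>\<close> only sees its arguments through this map.
  So it pays to reason modulo \<open>x \<approx> y \<longleftrightarrow> 0 \<rightarrow> x = 0 \<rightarrow> y\<close>, a congruence for all
  operations. Modulo \<open>\<approx>\<close> the operations \<open>\<^sup>+\<close> and \<open>\<^sup>-\<close> are the translations
  \<open>w \<mapsto> \<not>1 \<rightarrow> (1 \<rightarrow> w)\<close> and \<open>w \<mapsto> 1 \<rightarrow> (\<not>1 \<rightarrow> w)\<close> (QW*5), hence distribute
  over \<open>\<or>\<close> by (QW*12); and they are complementary projections: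
  \<open>x\<^sup>+\<^sup>+ \<approx> x\<^sup>+\<close>, \<open>x\<^sup>-\<^sup>- \<approx> x\<^sup>-\<close>, \<open>x\<^sup>+\<^sup>- \<approx> 0 \<approx> x\<^sup>-\<^sup>+\<close>.
  Item (5), from (QW*6), splits every element, and so every join and meet, into its positive
  and negative part. Absorption then only has to be checked for positive elements \<open>p, q\<close>,
  where \<open>p \<or> q = \<not>p \<rightarrow> (p \<rightarrow> q)\<^sup>+\<close> and \<open>p \<and> q = \<not>p \<rightarrow> (p \<rightarrow> q)\<^sup>-\<close>, and there it
  follows from (QW*9).\<close>

locale quasi_wajsberg_star_algebra =
  fixes imp :: "'a \<Rightarrow> 'a \<Rightarrow> 'a" (infixr \<open>\<rhd>\<close> 60)
    and neg pl mi :: "'a \<Rightarrow> 'a" and one :: 'a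
  assumes quasi_wajsberg_star: "quasi_wajsberg_star imp neg pl mi one"
begin

abbreviation zero :: 'a where "zero \<equiv> one \<rhd> one"
abbreviation join :: "'a \<Rightarrow> 'a \<Rightarrow> 'a" (infixl \<open>\<squnion>\<close> 55) where "join \<equiv> qw_join imp neg pl mi"
abbreviation meet :: "'a \<Rightarrow> 'a \<Rightarrow> 'a" (infixl \<open>\<sqinter>\<close> 55) where "meet \<equiv> qw_meet imp neg pl mi"

lemma
  shows imp_contrapos: "x \<rhd> y = neg y \<rhd> neg x"
    and one_imp_imp_one: "(one \<rhd> x) \<rhd> one = one"
    and self_imp_imp: "(z \<rhd> z) \<rhd> (x \<rhd> y) = x \<rhd> y"
    and zero_imp_pl: "zero \<rhd> pl x = pl (zero \<rhd> x)"
    and pl_zero_imp: "pl (zero \<rhd> x) = (x \<rhd> one) \<rhd> one"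
    and zero_imp_mi: "zero \<rhd> mi x = mi (zero \<rhd> x)"
    and mi_zero_imp: "mi (zero \<rhd> x) = (x \<rhd> neg one) \<rhd> neg one"
    and imp_decompose: "x \<rhd> y = (pl y \<rhd> mi x) \<rhd> (pl x \<rhd> mi y)"
    and neg_imp: "neg (x \<rhd> y) = y \<rhd> x"
    and neg_neg: "neg (neg x) = x"
    and pl_imp_neg_imp: "pl (x \<rhd> (neg x \<rhd> y)) = pl x \<rhd> (neg (pl x) \<rhd> pl y)"
    and join_commute: "x \<squnion> y = y \<squnion> x"
    and imp_join_distrib: "x \<rhd> (y \<squnion> z) = (x \<rhd> y) \<squnion> (x \<rhd> z)"
  using quasi_wajsberg_star[unfolded quasi_wajsberg_star_def] by meson+

lemma neg_zero: "neg zero = zero"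
  by (fact neg_imp)

lemma imp_zero: "x \<rhd> zero = zero \<rhd> neg x"
  by (subst imp_contrapos) (simp only: neg_zero)

lemma zero_imp_imp: "zero \<rhd> (x \<rhd> y) = x \<rhd> y"
  by (fact self_imp_imp)

lemma self_imp: "x \<rhd> x = zero"
proof -
  have "x \<rhd> x = (x \<rhd> x) \<rhd> zero"
    by (simp only: imp_zero neg_imp zero_imp_imp)
  also have "\<dots> = zero"
    by (fact self_imp_imp)
  finally show ?thesis .
qed

lemma pl_zero: "pl zero = zero"
  using pl_zero_imp[of zero] by (simp only: zero_imp_imp one_imp_imp_one)

lemma mi_zero: "mi zero = zero"
proof -
  have "mi zero = (zero \<rhd> neg one) \<rhd> neg one"
    using mi_zero_imp[of zero] by (simp only: zero_imp_imp)
  also have "\<dots> = one \<rhd> (neg one \<rhd> zero)"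
    by (subst imp_contrapos) (simp only: neg_neg neg_imp)
  also have "\<dots> = zero"
    by (simp only: imp_zero neg_neg one_imp_imp_one)
  finally show ?thesis .
qed

lemma zero_imp_neg: "zero \<rhd> neg x = neg (zero \<rhd> x)"
  by (subst imp_contrapos) (simp only: neg_neg neg_zero neg_imp)

definition reg_equiv :: "'a \<Rightarrow> 'a \<Rightarrow> bool" (infix \<open>\<approx>\<close> 50)
  where "x \<approx> y \<longleftrightarrow> zero \<rhd> x = zero \<rhd> y"

lemma reg_equiv_refl [simp]: "x \<approx> x"
  by (simp add: reg_equiv_def)

lemma reg_equiv_sym: "x \<approx> y \<Longrightarrow> y \<approx> x"
  by (simp add: reg_equiv_def)

lemma reg_equiv_trans [trans]: "x \<approx> y \<Longrightarrow> y \<approx> z \<Longrightarrow> x \<approx> z"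
  by (simp add: reg_equiv_def)

lemma zero_imp_reg_equiv: "zero \<rhd> x \<approx> x"
  by (simp only: reg_equiv_def zero_imp_imp)

lemma reg_equiv_zero_iff: "x \<approx> zero \<longleftrightarrow> zero \<rhd> x = zero"
  by (simp only: reg_equiv_def zero_imp_imp)

lemma join_unfold:
  "x \<squnion> y = (pl (pl x \<rhd> pl y) \<rhd> mi (neg x)) \<rhd> (mi (mi y \<rhd> mi x) \<rhd> mi x)"
  by (fact qw_join_def)

lemma meet_unfold: "x \<sqinter> y = neg (neg x \<squnion> neg y)"
  by (fact qw_meet_def)

lemma zero_imp_decompose: "zero \<rhd> x = (zero \<rhd> neg (pl x)) \<rhd> (zero \<rhd> mi x)"
  using imp_decompose[of zero x] by (simp only: pl_zero mi_zero imp_zero)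

lemma mi_neg: "mi (neg x) \<approx> neg (pl x)"
proof -
  have "zero \<rhd> mi (neg x) = (neg x \<rhd> neg one) \<rhd> neg one"
    by (simp only: zero_imp_mi mi_zero_imp)
  also have "\<dots> = (one \<rhd> x) \<rhd> neg one"
    by (simp only: imp_contrapos[of "neg x"] neg_neg)
  also have "\<dots> = one \<rhd> (x \<rhd> one)"
    by (subst imp_contrapos) (simp only: neg_neg neg_imp)
  also have "\<dots> = neg (zero \<rhd> pl x)"
    by (simp only: zero_imp_pl pl_zero_imp neg_imp)
  finally show ?thesis
    by (simp only: reg_equiv_def zero_imp_neg)
qed

lemma join_self: "x \<squnion> x = zero \<rhd> x"
proof -
  have "x \<squnion> x = (pl zero \<rhd> mi (neg x)) \<rhd> (mi zero \<rhd> mi x)"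
    by (simp only: join_unfold self_imp[of "pl x"] self_imp[of "mi x"])
  also have "\<dots> = (zero \<rhd> neg (pl x)) \<rhd> (zero \<rhd> mi x)"
    by (simp only: pl_zero mi_zero mi_neg[unfolded reg_equiv_def])
  also have "\<dots> = zero \<rhd> x"
    by (rule zero_imp_decompose[symmetric])
  finally show ?thesis .
qed

lemma imp_zero_imp: "x \<rhd> (zero \<rhd> y) = x \<rhd> y"
proof -
  have "x \<rhd> (zero \<rhd> y) = x \<rhd> (y \<squnion> y)"
    by (simp only: join_self)
  also have "\<dots> = (x \<rhd> y) \<squnion> (x \<rhd> y)"
    by (fact imp_join_distrib)
  finally show ?thesis
    by (simp only: join_self zero_imp_imp)
qed

lemma zero_imp_imp_left: "(zero \<rhd> x) \<rhd> y = x \<rhd> y"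
  by (subst (1 2) imp_contrapos) (simp only: zero_imp_neg[symmetric] imp_zero_imp)

lemma imp_reg_cong: "x \<approx> x' \<Longrightarrow> y \<approx> y' \<Longrightarrow> x \<rhd> y = x' \<rhd> y'"
  by (metis reg_equiv_def imp_zero_imp zero_imp_imp_left)

lemma imp_eq_zero_if_reg_equiv: "x \<approx> y \<Longrightarrow> x \<rhd> y = zero"
  using imp_reg_cong[of x y y y] self_imp[of y] by simp

lemma neg_reg_cong: "x \<approx> y \<Longrightarrow> neg x \<approx> neg y"
  by (simp add: reg_equiv_def zero_imp_neg)

lemma pl_reg_cong: "x \<approx> y \<Longrightarrow> pl x \<approx> pl y"
  by (simp add: reg_equiv_def zero_imp_pl)

lemma mi_reg_cong: "x \<approx> y \<Longrightarrow> mi x \<approx> mi y"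
  by (simp add: reg_equiv_def zero_imp_mi)

lemma join_reg_cong:
  assumes "x \<approx> x'" and "y \<approx> y'"
  shows "x \<squnion> y = x' \<squnion> y'"
proof -
  have "pl x \<rhd> pl y = pl x' \<rhd> pl y'"
    using assms by (intro imp_reg_cong pl_reg_cong)
  then have "pl (pl x \<rhd> pl y) \<rhd> mi (neg x) = pl (pl x' \<rhd> pl y') \<rhd> mi (neg x')"
    using assms by (metis imp_reg_cong reg_equiv_refl mi_reg_cong neg_reg_cong)
  moreover have "mi y \<rhd> mi x = mi y' \<rhd> mi x'"
    using assms by (intro imp_reg_cong mi_reg_cong)
  then have "mi (mi y \<rhd> mi x) \<rhd> mi x = mi (mi y' \<rhd> mi x') \<rhd> mi x'"
    using assms by (metis imp_reg_cong reg_equiv_refl mi_reg_cong)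
  ultimately show ?thesis
    by (simp only: join_unfold)
qed

lemma meet_reg_cong: "x \<approx> x' \<Longrightarrow> y \<approx> y' \<Longrightarrow> x \<sqinter> y = x' \<sqinter> y'"
  unfolding meet_unfold by (metis join_reg_cong neg_reg_cong)

lemma zero_imp_eq: "zero \<rhd> x = neg (pl x) \<rhd> mi x"
  using zero_imp_decompose[of x] by (simp only: imp_zero_imp zero_imp_imp_left)

lemma zero_imp_pl_eq: "zero \<rhd> pl x = neg one \<rhd> (one \<rhd> x)"
proof -
  have "zero \<rhd> pl x = (x \<rhd> one) \<rhd> one"
    by (simp only: zero_imp_pl pl_zero_imp)
  also have "\<dots> = neg one \<rhd> (one \<rhd> x)"
    by (subst imp_contrapos) (simp only: neg_imp)
  finally show ?thesis .
qed

lemma zero_imp_mi_eq: "zero \<rhd> mi x = one \<rhd> (neg one \<rhd> x)"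
proof -
  have "zero \<rhd> mi x = (x \<rhd> neg one) \<rhd> neg one"
    by (simp only: zero_imp_mi mi_zero_imp)
  also have "\<dots> = one \<rhd> (neg one \<rhd> x)"
    by (subst imp_contrapos) (simp only: neg_imp neg_neg)
  finally show ?thesis .
qed

lemma pl_neg: "pl (neg x) \<approx> neg (mi x)"
proof -
  have "neg (mi x) \<approx> pl (neg x)"
    using neg_reg_cong[OF mi_neg[of "neg x"]] by (simp only: neg_neg)
  then show ?thesis
    by (rule reg_equiv_sym)
qed

lemma one_imp_one_imp: "one \<rhd> (one \<rhd> x) = neg one"
proof -
  have "neg ((one \<rhd> x) \<rhd> one) = neg one"
    by (simp only: one_imp_imp_one)
  then show ?thesis
    by (simp only: neg_imp)
qed

lemma one_imp_neg_one: "one \<rhd> neg one = neg one"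
  by (metis one_imp_one_imp)

lemma pl_one: "pl one \<approx> one"
  by (simp only: reg_equiv_def zero_imp_pl_eq imp_zero neg_neg)

lemma mi_one: "mi one \<approx> zero"
  by (simp only: reg_equiv_zero_iff zero_imp_mi mi_zero_imp one_imp_neg_one self_imp[of "neg one"])

lemma pl_neg_one: "pl (neg one) \<approx> zero"
  using reg_equiv_trans[OF pl_neg neg_reg_cong[OF mi_one]] by (simp only: neg_zero)

lemma mi_neg_one: "mi (neg one) \<approx> neg one"
  by (rule reg_equiv_trans[OF mi_neg neg_reg_cong[OF pl_one]])

lemma mi_imp_one: "mi x \<rhd> one = one"
proof -
  have "mi x \<rhd> one = (zero \<rhd> mi x) \<rhd> one"
    by (rule zero_imp_imp_left[symmetric])
  also have "\<dots> = (one \<rhd> (neg one \<rhd> x)) \<rhd> one"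
    by (simp only: zero_imp_mi_eq)
  also have "\<dots> = one"
    by (rule one_imp_imp_one)
  finally show ?thesis .
qed

lemma pl_imp_neg_one: "pl x \<rhd> neg one = neg one"
proof -
  have "pl x \<rhd> neg one = (zero \<rhd> pl x) \<rhd> neg one"
    by (rule zero_imp_imp_left[symmetric])
  also have "\<dots> = ((x \<rhd> one) \<rhd> one) \<rhd> neg one"
    by (simp only: zero_imp_pl pl_zero_imp)
  also have "\<dots> = one \<rhd> (one \<rhd> (x \<rhd> one))"
    by (subst imp_contrapos) (simp only: neg_neg neg_imp)
  also have "\<dots> = neg one"
    by (rule one_imp_one_imp)
  finally show ?thesis .
qed

lemma pl_imp_one: "pl x \<rhd> one = x \<rhd> one"
proof -
  have one_imp_mi: "one \<rhd> mi x = neg one"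
    using arg_cong[where f = neg, OF mi_imp_one] by (simp only: neg_imp)
  have "x \<rhd> one = (pl one \<rhd> mi x) \<rhd> (pl x \<rhd> mi one)"
    by (rule imp_decompose)
  also have "\<dots> = neg one \<rhd> (pl x \<rhd> zero)"
    by (simp only: imp_reg_cong[OF pl_one reg_equiv_refl] imp_reg_cong[OF reg_equiv_refl mi_one]
        one_imp_mi)
  also have "\<dots> = neg one \<rhd> neg (pl x)"
    by (simp only: imp_zero imp_zero_imp)
  finally show ?thesis
    by (simp only: imp_contrapos[of "pl x"])
qed

lemma mi_imp_neg_one: "mi x \<rhd> neg one = x \<rhd> neg one"
proof -
  have "x \<rhd> neg one = (pl (neg one) \<rhd> mi x) \<rhd> (pl x \<rhd> mi (neg one))"
    by (rule imp_decompose)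
  also have "\<dots> = mi x \<rhd> (pl x \<rhd> neg one)"
    by (simp only: imp_reg_cong[OF pl_neg_one reg_equiv_refl]
        imp_reg_cong[OF reg_equiv_refl mi_neg_one] zero_imp_imp_left)
  also have "\<dots> = mi x \<rhd> neg one"
    by (simp only: pl_imp_neg_one)
  finally show ?thesis
    by (rule sym)
qed

lemma pl_pl: "pl (pl x) \<approx> pl x"
proof -
  have "zero \<rhd> pl (pl x) = (pl x \<rhd> one) \<rhd> one"
    by (simp only: zero_imp_pl[of "pl x"] pl_zero_imp)
  also have "\<dots> = zero \<rhd> pl x"
    by (simp only: pl_imp_one zero_imp_pl pl_zero_imp)
  finally show ?thesis
    by (simp only: reg_equiv_def)
qed

lemma mi_pl: "mi (pl x) \<approx> zero"
  by (simp only: reg_equiv_zero_iff zero_imp_mi mi_zero_imp pl_imp_neg_one self_imp[of "neg one"])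

lemma pl_mi: "pl (mi x) \<approx> zero"
  by (simp only: reg_equiv_zero_iff zero_imp_pl pl_zero_imp mi_imp_one)

lemma mi_mi: "mi (mi x) \<approx> mi x"
proof -
  have "zero \<rhd> mi (mi x) = (mi x \<rhd> neg one) \<rhd> neg one"
    by (simp only: zero_imp_mi[of "mi x"] mi_zero_imp)
  also have "\<dots> = zero \<rhd> mi x"
    by (simp only: mi_imp_neg_one zero_imp_mi mi_zero_imp)
  finally show ?thesis
    by (simp only: reg_equiv_def)
qed

lemma join_zero: "x \<squnion> zero = zero \<rhd> pl x"
proof -
  have "mi (mi x \<rhd> zero) \<approx> mi (neg (mi x))"
    by (simp only: imp_zero mi_reg_cong zero_imp_reg_equiv)
  also have "\<dots> \<approx> neg (pl (mi x))"
    by (fact mi_neg)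
  also have "\<dots> \<approx> zero"
    using neg_reg_cong[OF pl_mi] by (simp only: neg_zero)
  finally have "mi (mi x \<rhd> zero) \<rhd> zero = zero"
    by (rule imp_eq_zero_if_reg_equiv)
  moreover have "pl (zero \<rhd> pl x) \<rhd> zero = pl (pl x) \<rhd> zero"
    by (intro imp_reg_cong pl_reg_cong zero_imp_reg_equiv reg_equiv_refl)
  ultimately have "zero \<squnion> x = (pl (pl x) \<rhd> zero) \<rhd> zero"
    by (simp only: join_unfold pl_zero mi_zero neg_zero)
  also have "\<dots> = zero \<rhd> pl (pl x)"
    by (simp only: imp_zero zero_imp_neg neg_neg zero_imp_imp)
  also have "\<dots> = zero \<rhd> pl x"
    using pl_pl by (simp only: reg_equiv_def)
  finally show ?thesis
    by (simp only: join_commute)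
qed

lemma meet_zero: "x \<sqinter> zero = zero \<rhd> mi x"
proof -
  have "x \<sqinter> zero = zero \<rhd> neg (pl (neg x))"
    by (simp only: meet_unfold neg_zero join_zero zero_imp_neg)
  also have "\<dots> = zero \<rhd> mi x"
    using neg_reg_cong[OF pl_neg[of x]] by (simp only: neg_neg reg_equiv_def)
  finally show ?thesis .
qed

lemma join_pl_zero: "pl x \<squnion> zero = zero \<rhd> pl x"
  using pl_pl by (simp only: join_zero reg_equiv_def)

lemma meet_mi_zero: "mi x \<sqinter> zero = zero \<rhd> mi x"
  using mi_mi by (simp only: meet_zero reg_equiv_def)

lemma join_mi_zero: "mi x \<squnion> zero = zero"
  using pl_mi by (simp only: join_zero reg_equiv_zero_iff)

lemma meet_pl_zero: "pl x \<sqinter> zero = zero"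
  using mi_pl by (simp only: meet_zero reg_equiv_zero_iff)

lemma meet_commute: "x \<sqinter> y = y \<sqinter> x"
  by (simp only: meet_unfold join_commute)

lemma zero_imp_join: "zero \<rhd> (x \<squnion> y) = x \<squnion> y"
  by (simp only: join_unfold zero_imp_imp)

lemma zero_imp_meet: "zero \<rhd> (x \<sqinter> y) = x \<sqinter> y"
  by (simp only: meet_unfold join_unfold neg_imp zero_imp_imp)

lemma pl_join: "pl (x \<squnion> y) = pl x \<squnion> pl y"
proof -
  have "pl (x \<squnion> y) = zero \<rhd> pl (x \<squnion> y)"
    by (simp only: zero_imp_pl zero_imp_join)
  also have "\<dots> = neg one \<rhd> (one \<rhd> (x \<squnion> y))"
    by (fact zero_imp_pl_eq)
  also have "\<dots> = (zero \<rhd> pl x) \<squnion> (zero \<rhd> pl y)"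
    by (simp only: imp_join_distrib zero_imp_pl_eq)
  also have "\<dots> = pl x \<squnion> pl y"
    by (intro join_reg_cong zero_imp_reg_equiv)
  finally show ?thesis .
qed

lemma mi_join: "mi (x \<squnion> y) = mi x \<squnion> mi y"
proof -
  have "mi (x \<squnion> y) = zero \<rhd> mi (x \<squnion> y)"
    by (simp only: zero_imp_mi zero_imp_join)
  also have "\<dots> = one \<rhd> (neg one \<rhd> (x \<squnion> y))"
    by (fact zero_imp_mi_eq)
  also have "\<dots> = (zero \<rhd> mi x) \<squnion> (zero \<rhd> mi y)"
    by (simp only: imp_join_distrib zero_imp_mi_eq)
  also have "\<dots> = mi x \<squnion> mi y"
    by (intro join_reg_cong zero_imp_reg_equiv)
  finally show ?thesis .
qed

lemma pl_meet: "pl (x \<sqinter> y) = pl x \<sqinter> pl y"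
proof -
  have "pl (x \<sqinter> y) \<approx> neg (mi (neg x \<squnion> neg y))"
    unfolding meet_unfold by (fact pl_neg)
  also have "neg (mi (neg x \<squnion> neg y)) = pl x \<sqinter> pl y"
    by (simp only: mi_join meet_unfold join_reg_cong[OF mi_neg mi_neg])
  finally show ?thesis
    unfolding reg_equiv_def by (simp only: zero_imp_pl zero_imp_meet)
qed

lemma mi_meet: "mi (x \<sqinter> y) = mi x \<sqinter> mi y"
proof -
  have "mi (x \<sqinter> y) \<approx> neg (pl (neg x \<squnion> neg y))"
    unfolding meet_unfold by (fact mi_neg)
  also have "neg (pl (neg x \<squnion> neg y)) = mi x \<sqinter> mi y"
    by (simp only: pl_join meet_unfold join_reg_cong[OF pl_neg pl_neg])
  finally show ?thesis
    unfolding reg_equiv_def by (simp only: zero_imp_mi zero_imp_meet)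
qed

lemma join_decompose: "x \<squnion> y = neg (pl x \<squnion> pl y) \<rhd> (mi x \<squnion> mi y)"
  using zero_imp_eq[of "x \<squnion> y"] by (simp only: zero_imp_join pl_join mi_join)

lemma meet_decompose: "x \<sqinter> y = neg (pl x \<sqinter> pl y) \<rhd> (mi x \<sqinter> mi y)"
  using zero_imp_eq[of "x \<sqinter> y"] by (simp only: zero_imp_meet pl_meet mi_meet)

lemma join_pl_mi: "pl x \<squnion> mi x = zero \<rhd> pl x"
proof -
  have "pl x \<squnion> mi x = neg (pl (pl x) \<squnion> pl (mi x)) \<rhd> (mi (pl x) \<squnion> mi (mi x))"
    by (fact join_decompose)
  also have "\<dots> = neg (pl x \<squnion> zero) \<rhd> (mi x \<squnion> zero)"
    by (simp only: join_reg_cong[OF pl_pl pl_mi] join_reg_cong[OF mi_pl mi_mi] join_commute[of zero])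
  also have "\<dots> = zero \<rhd> pl x"
    by (simp only: join_pl_zero join_mi_zero imp_zero neg_neg zero_imp_imp)
  finally show ?thesis .
qed

lemma meet_pl_mi: "pl x \<sqinter> mi x = zero \<rhd> mi x"
proof -
  have "pl x \<sqinter> mi x = neg (pl (pl x) \<sqinter> pl (mi x)) \<rhd> (mi (pl x) \<sqinter> mi (mi x))"
    by (fact meet_decompose)
  also have "\<dots> = neg (pl x \<sqinter> zero) \<rhd> (mi x \<sqinter> zero)"
    by (simp only: meet_reg_cong[OF pl_pl pl_mi] meet_reg_cong[OF mi_pl mi_mi] meet_commute[of zero])
  also have "\<dots> = zero \<rhd> mi x"
    by (simp only: meet_pl_zero meet_mi_zero neg_zero zero_imp_imp)
  finally show ?thesis .
qed


lemma meet_self: "x \<sqinter> x = zero \<rhd> x"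
  by (simp only: meet_unfold join_self zero_imp_neg neg_neg)

lemma mi_imp_neg_imp: "mi (x \<rhd> (neg x \<rhd> y)) \<approx> mi x \<rhd> (neg (mi x) \<rhd> mi y)"
proof -
  define w where "w = x \<rhd> (neg x \<rhd> y)"
  have "neg w = neg x \<rhd> (neg (neg x) \<rhd> neg y)"
    unfolding w_def by (subst (1 2) imp_contrapos) (simp only: neg_imp neg_neg)
  then have "pl (neg w) = pl (neg x) \<rhd> (neg (pl (neg x)) \<rhd> pl (neg y))"
    by (simp only: pl_imp_neg_imp)
  also have "\<dots> = neg (mi x) \<rhd> (mi x \<rhd> neg (mi y))"
  proof -
    have "neg (pl (neg x)) \<rhd> pl (neg y) = mi x \<rhd> neg (mi y)"
      using neg_reg_cong[OF pl_neg[of x]] by (intro imp_reg_cong pl_neg) (simp only: neg_neg)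
    then show ?thesis
      by (simp only:) (intro imp_reg_cong pl_neg reg_equiv_refl)
  qed
  finally have "neg (pl (neg w)) = mi x \<rhd> (neg (mi x) \<rhd> mi y)"
    by (subst (1 2) imp_contrapos) (simp only: neg_imp neg_neg)
  moreover have "mi w \<approx> neg (pl (neg w))"
    using mi_neg[of "neg w"] by (simp only: neg_neg)
  ultimately show ?thesis
    by (simp only: w_def)
qed

definition positive :: "'a \<Rightarrow> bool"
  where "positive p \<longleftrightarrow> pl p \<approx> p \<and> mi p \<approx> zero"

lemma positive_pl: "positive (pl x)"
  unfolding positive_def using pl_pl mi_pl by blast

lemma positive_reg_cong: "x \<approx> y \<Longrightarrow> positive x \<Longrightarrow> positive y"
  unfolding positive_def reg_equiv_def by (metis zero_imp_pl zero_imp_mi)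

lemma positive_neg_mi: "positive (neg (mi x))"
  by (rule positive_reg_cong[OF pl_neg positive_pl])

lemma join_positive:
  assumes "positive p" and "positive q"
  shows "p \<squnion> q = neg p \<rhd> pl (p \<rhd> q)"
proof -
  have p: "pl p \<approx> p" "mi p \<approx> zero" and q: "pl q \<approx> q" "mi q \<approx> zero"
    using assms unfolding positive_def by blast+
  have "pl p \<rhd> pl q = p \<rhd> q"
    using p q by (intro imp_reg_cong)
  moreover have "mi (mi q \<rhd> mi p) \<rhd> mi p = zero"
  proof -
    have "mi q \<rhd> mi p = zero"
      by (rule imp_eq_zero_if_reg_equiv) (rule reg_equiv_trans[OF q(2) reg_equiv_sym[OF p(2)]])
    then show ?thesis
      using p(2) by (simp only: mi_zero reg_equiv_zero_iff)
  qed
  ultimately have "p \<squnion> q = (pl (p \<rhd> q) \<rhd> mi (neg p)) \<rhd> zero"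
    by (simp only: join_unfold)
  also have "\<dots> = mi (neg p) \<rhd> pl (p \<rhd> q)"
    by (simp only: imp_zero neg_imp zero_imp_imp)
  also have "\<dots> = neg p \<rhd> pl (p \<rhd> q)"
    by (rule imp_reg_cong[OF reg_equiv_trans[OF mi_neg neg_reg_cong[OF p(1)]] reg_equiv_refl])
  finally show ?thesis .
qed

lemma meet_positive:
  assumes "positive p" and "positive q"
  shows "p \<sqinter> q = neg p \<rhd> mi (p \<rhd> q)"
proof -
  have p: "pl p \<approx> p" "mi p \<approx> zero" and q: "pl q \<approx> q" "mi q \<approx> zero"
    using assms unfolding positive_def by blast+
  have pl_neg_zero: "pl (neg r) \<approx> zero" if "mi r \<approx> zero" for r
    using reg_equiv_trans[OF pl_neg neg_reg_cong[OF that]] by (simp only: neg_zero)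
  have mi_neg_eq: "mi (neg r) \<approx> neg r" if "pl r \<approx> r" for r
    using reg_equiv_trans[OF mi_neg neg_reg_cong[OF that]] .
  have "pl (pl (neg p) \<rhd> pl (neg q)) \<rhd> mi (neg (neg p)) = zero"
  proof -
    have "pl (neg p) \<rhd> pl (neg q) = zero"
      by (rule imp_eq_zero_if_reg_equiv)
        (rule reg_equiv_trans[OF pl_neg_zero[OF p(2)] reg_equiv_sym[OF pl_neg_zero[OF q(2)]]])
    then show ?thesis
      using p(2) by (simp only: pl_zero neg_neg reg_equiv_zero_iff)
  qed
  moreover have "mi (neg q) \<rhd> mi (neg p) = p \<rhd> q"
    by (simp only: imp_reg_cong[OF mi_neg_eq[OF q(1)] mi_neg_eq[OF p(1)]] imp_contrapos[of p q])
  moreover have "mi (p \<rhd> q) \<rhd> mi (neg p) = mi (p \<rhd> q) \<rhd> neg p"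
    by (rule imp_reg_cong[OF reg_equiv_refl mi_neg_eq[OF p(1)]])
  ultimately have "neg p \<squnion> neg q = mi (p \<rhd> q) \<rhd> neg p"
    by (simp only: join_unfold zero_imp_imp)
  then show ?thesis
    by (simp only: meet_unfold neg_imp)
qed

lemma positive_join:
  assumes "positive p" and "positive q"
  shows "positive (p \<squnion> q)"
proof -
  have p: "pl p \<approx> p" "mi p \<approx> zero" and q: "pl q \<approx> q" "mi q \<approx> zero"
    using assms unfolding positive_def by blast+
  have "pl (p \<squnion> q) = p \<squnion> q"
    by (simp only: pl_join join_reg_cong[OF p(1) q(1)])
  moreover have "mi (p \<squnion> q) = zero"
    by (simp only: mi_join join_reg_cong[OF p(2) q(2)] join_zero pl_zero zero_imp_imp)
  ultimately show ?thesis
    unfolding positive_def by simp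
qed

lemma positive_meet:
  assumes "positive p" and "positive q"
  shows "positive (p \<sqinter> q)"
proof -
  have p: "pl p \<approx> p" "mi p \<approx> zero" and q: "pl q \<approx> q" "mi q \<approx> zero"
    using assms unfolding positive_def by blast+
  have "pl (p \<sqinter> q) = p \<sqinter> q"
    by (simp only: pl_meet meet_reg_cong[OF p(1) q(1)])
  moreover have "mi (p \<sqinter> q) = zero"
    by (simp only: mi_meet meet_reg_cong[OF p(2) q(2)] meet_zero mi_zero zero_imp_imp)
  ultimately show ?thesis
    unfolding positive_def by simp
qed


lemma join_meet_absorb_positive:
  assumes "positive p" and "positive q"
  shows "p \<squnion> (p \<sqinter> q) = zero \<rhd> p"
proof -
  have "p \<squnion> (p \<sqinter> q) = neg p \<rhd> pl (p \<rhd> (p \<sqinter> q))"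
    by (rule join_positive[OF assms(1) positive_meet[OF assms]])
  also have "\<dots> = neg p \<rhd> pl (p \<rhd> (neg p \<rhd> mi (p \<rhd> q)))"
    by (simp only: meet_positive[OF assms])
  also have "\<dots> = neg p \<rhd> (pl p \<rhd> (neg (pl p) \<rhd> pl (mi (p \<rhd> q))))"
    by (simp only: pl_imp_neg_imp)
  also have "\<dots> = neg p \<rhd> (pl p \<rhd> (neg (pl p) \<rhd> zero))"
    by (simp only: imp_reg_cong[OF reg_equiv_refl pl_mi])
  also have "\<dots> = zero \<rhd> p"
    by (simp only: imp_zero neg_neg imp_zero_imp self_imp[of "pl p"])
  finally show ?thesis .
qed

lemma meet_join_absorb_positive:
  assumes "positive p" and "positive q"
  shows "p \<sqinter> (p \<squnion> q) = zero \<rhd> p"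
proof -
  have mi_p: "mi p \<approx> zero"
    using assms(1) unfolding positive_def by blast
  have "p \<sqinter> (p \<squnion> q) = neg p \<rhd> mi (p \<rhd> (p \<squnion> q))"
    by (rule meet_positive[OF assms(1) positive_join[OF assms]])
  also have "\<dots> = neg p \<rhd> mi (p \<rhd> (neg p \<rhd> pl (p \<rhd> q)))"
    by (simp only: join_positive[OF assms])
  also have "\<dots> = neg p \<rhd> zero"
  proof (rule imp_reg_cong[OF reg_equiv_refl])
    have "mi (p \<rhd> (neg p \<rhd> pl (p \<rhd> q))) \<approx> mi p \<rhd> (neg (mi p) \<rhd> mi (pl (p \<rhd> q)))"
      by (fact mi_imp_neg_imp)
    also have "\<dots> = zero"
    proof -
      have "neg (mi p) \<approx> zero"
        using neg_reg_cong[OF mi_p] by (simp only: neg_zero)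
      then have "neg (mi p) \<rhd> mi (pl (p \<rhd> q)) = zero"
        by (intro imp_eq_zero_if_reg_equiv reg_equiv_trans[OF _ reg_equiv_sym[OF mi_pl]])
      then show ?thesis
        by (simp only: imp_reg_cong[OF mi_p reg_equiv_refl] zero_imp_imp)
    qed
    finally show "mi (p \<rhd> (neg p \<rhd> pl (p \<rhd> q))) \<approx> zero" .
  qed
  also have "\<dots> = zero \<rhd> p"
    by (simp only: imp_zero neg_neg)
  finally show ?thesis .
qed

lemma join_meet_absorb_mi: "mi x \<squnion> (mi x \<sqinter> mi y) = zero \<rhd> mi x"
proof -
  have "mi x \<squnion> (mi x \<sqinter> mi y) = neg (neg (mi x) \<sqinter> (neg (mi x) \<squnion> neg (mi y)))"
    by (simp only: meet_unfold neg_neg)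
  also have "\<dots> = zero \<rhd> mi x"
    by (simp only: meet_join_absorb_positive positive_neg_mi zero_imp_neg neg_neg)
  finally show ?thesis .
qed

lemma meet_join_absorb_mi: "mi x \<sqinter> (mi x \<squnion> mi y) = zero \<rhd> mi x"
proof -
  have "mi x \<sqinter> (mi x \<squnion> mi y) = neg (neg (mi x) \<squnion> (neg (mi x) \<sqinter> neg (mi y)))"
    by (simp only: meet_unfold neg_neg)
  also have "\<dots> = zero \<rhd> mi x"
    by (simp only: join_meet_absorb_positive positive_neg_mi zero_imp_neg neg_neg)
  finally show ?thesis .
qed

lemma join_meet_absorb: "x \<squnion> (x \<sqinter> y) = x \<squnion> x"
proof -
  have "x \<squnion> (x \<sqinter> y) = neg (pl x \<squnion> (pl x \<sqinter> pl y)) \<rhd> (mi x \<squnion> (mi x \<sqinter> mi y))"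
    by (simp only: join_decompose[of x "x \<sqinter> y"] pl_meet mi_meet)
  also have "\<dots> = neg (pl x \<squnion> pl x) \<rhd> (mi x \<squnion> mi x)"
    by (simp only: join_meet_absorb_positive positive_pl join_meet_absorb_mi join_self)
  finally show ?thesis
    by (simp only: join_decompose[of x x, symmetric])
qed

lemma meet_join_absorb: "x \<sqinter> (x \<squnion> y) = x \<sqinter> x"
proof -
  have "x \<sqinter> (x \<squnion> y) = neg (pl x \<sqinter> (pl x \<squnion> pl y)) \<rhd> (mi x \<sqinter> (mi x \<squnion> mi y))"
    by (simp only: meet_decompose[of x "x \<squnion> y"] pl_join mi_join)
  also have "\<dots> = neg (pl x \<sqinter> pl x) \<rhd> (mi x \<sqinter> mi x)"
    by (simp only: meet_join_absorb_positive positive_pl meet_join_absorb_mi meet_self)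
  finally show ?thesis
    by (simp only: meet_decompose[of x x, symmetric])
qed

end

theorem proposition3p5:
  fixes imp :: "'a \<Rightarrow> 'a \<Rightarrow> 'a" and neg pl mi :: "'a \<Rightarrow> 'a" and one :: 'a
  assumes "quasi_wajsberg_star imp neg pl mi one"
  defines "zero \<equiv> imp one one"
      and "join \<equiv> qw_join imp neg pl mi"
      and "meet \<equiv> qw_meet imp neg pl mi"
  shows "\<forall>x y.
     (join x zero = imp zero (pl x) \<and> meet x zero = imp zero (mi x)) \<and>
     (join (pl x) zero = imp zero (pl x) \<and> meet (mi x) zero = imp zero (mi x) \<and>
      join (mi x) zero = zero \<and> meet (pl x) zero = zero) \<and>
     (join x y = imp (neg (join (pl x) (pl y))) (join (mi x) (mi y)) \<and>
      meet x y = imp (neg (meet (pl x) (pl y))) (meet (mi x) (mi y))) \<and>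
     (join (pl x) (mi x) = imp zero (pl x) \<and> meet (pl x) (mi x) = imp zero (mi x)) \<and>
     (imp zero x = imp (neg (pl x)) (mi x)) \<and>
     (pl (join x y) = join (pl x) (pl y) \<and> mi (join x y) = join (mi x) (mi y) \<and>
      pl (meet x y) = meet (pl x) (pl y) \<and> mi (meet x y) = meet (mi x) (mi y)) \<and>
     (join x (meet x y) = join x x \<and> meet x (join x y) = meet x x)"
proof -
  interpret quasi_wajsberg_star_algebra imp neg pl mi one
    by unfold_locales (fact assms(1))
  show ?thesis
    unfolding zero_def join_def meet_def
    by (intro allI conjI)
      (rule join_zero meet_zero join_pl_zero meet_mi_zero join_mi_zero meet_pl_zero
        join_decompose meet_decompose join_pl_mi meet_pl_mi zero_imp_eq
        pl_join mi_join pl_meet mi_meet join_meet_absorb meet_join_absorb)+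
qed

end
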